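(* Let $(X_i)_{i=1}^n$ be a martingale difference sequence adapted to a filtration $(\mathcal F_i)_{i=0}^n$, $S_t=\sum_{i=1}^tX_i$, and suppose that for each $i$ there is a constant $m_i>0$ with $\mathbb E\big[\exp\big((|X_i|/m_i)^{1/\theta}\big)\mid\mathcal F_{i-1}\big]\le2$; let $m_*=\max_im_i$. Then for any $\delta\in(0,1)$: (i) if $\theta=1/2$, $$P\Big(\bigcup_{t=1}^n\Big\{S_t\ge4\sqrt{e\sum_{i=1}^nm_i^2\log(1/\delta)}\Big\}\Big)\le\delta;$$ (ii) if $\theta\ge1$, then for any $s\ge0$, $$P\Big(\bigcup_{t=1}^n\Big\{S_t\ge\sqrt{C_1\sum_{i=1}^nm_i^2\log(2/\delta)}+4m_*\max\Big\{\log^{\theta-1}\Big(\frac{2e\sum_{j=1}^nm_j^s}{m_*^s\delta}\Big),(s\theta-s)^{\theta-1}\Big\}\log(2/\delta)\Big\}\Big)\le\delta,$$ where $C_1=2^{3\theta+1}\Gamma(3\theta+1)$ and $0^0=1$. *)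

theory Defs
  imports "HOL-Probability.Probability"
begin

definition filtration_upto :: "'a measure \<Rightarrow> nat \<Rightarrow> (nat \<Rightarrow> 'a measure) \<Rightarrow> bool" where
  "filtration_upto M n F \<longleftrightarrow>
     (\<forall>i\<le>n. subalgebra M (F i)) \<and>
     (\<forall>i j. i \<le> j \<and> j \<le> n \<longrightarrow> sets (F i) \<subseteq> sets (F j))"

definition mds_upto :: "'a measure \<Rightarrow> nat \<Rightarrow> (nat \<Rightarrow> 'a measure) \<Rightarrow> (nat \<Rightarrow> 'a \<Rightarrow> real) \<Rightarrow> bool" where
  "mds_upto M n F X \<longleftrightarrow>
     filtration_upto M n F \<and>
     (\<forall>i\<in>{1..n}. X i \<in> borel_measurable (F i) \<and> integrable M (X i) \<and>
        (AE x in M. real_cond_exp M (F (i - 1)) (X i) x = 0))"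

text \<open>Real power with the convention 0^0 = 1 (powr has 0 powr 0 = 0).\<close>
definition zpow :: "real \<Rightarrow> real \<Rightarrow> real" where
  "zpow x a = (if x = 0 \<and> a = 0 then 1 else x powr a)"

end

theory Submission
  imports Defs
begin

text \<open>For \<open>\<lambda> \<ge> 0\<close> and constants \<open>c i\<close> bounding the conditional moment generating functions
  \<open>E[exp (\<lambda> Y i) | F (i - 1)]\<close>, the process \<open>exp (\<lambda> S t) / (c 1 \<cdots> c t)\<close> is a supermartingale;
  stopping it when \<open>S t\<close> first reaches \<open>u\<close> gives \<open>P (max\<^sub>t S t \<ge> u) \<le> exp (-\<lambda>u) \<cdot> c 1 \<cdots> c n\<close>.
  The conditional moment generating functions are bounded through
  \<open>exp w \<le> 1 + w + w\<^sup>2/2 \<cdot> exp (max w 0)\<close>: the linear term has conditional mean zero and the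
  remainder is paid for by the Orlicz condition, which for \<open>\<theta> = 1/2\<close> yields \<open>c i = exp (4\<lambda>\<^sup>2 m\<^sub>i\<^sup>2)\<close>.
  For \<open>\<theta> \<ge> 1\<close> the increments are first truncated from above. By Markov's inequality applied to
  the Orlicz condition, some truncation is active with probability at most \<open>\<delta>/2\<close>; below the
  truncation levels, \<open>y\<^sup>p e\<^sup>-\<^sup>y \<le> \<Gamma>(p + 1)\<close> gives \<open>c i = exp (\<lambda>\<^sup>2 m\<^sub>i\<^sup>2 \<cdot> weibull_mgf_const \<theta>)\<close> for all \<open>\<lambda>\<close> up to a
  threshold, and optimising \<open>\<lambda>\<close> below that threshold accounts for the other \<open>\<delta>/2\<close>.\<close>
lemma powr_mult_exp_neg_le_Gamma:
  fixes p y :: real assumes p: "p > 0" and y: "y \<ge> 0"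
  shows "y powr p * exp (-y) \<le> Gamma (p + 1)"
proof -
  have tail: "(\<integral>\<^sup>+t. ennreal (exp (-t)) * indicator {y..} t \<partial>lborel) = ennreal (0 - (- exp (-y)))"
    by (rule nn_integral_FTC_atLeast[where F="\<lambda>t. - exp (-t)"])
       (auto intro!: derivative_eq_intros tendsto_minus_cancel_left[THEN iffD1]
             filterlim_compose[OF exp_at_bot filterlim_uminus_at_bot_at_top])
  have "ennreal (y powr p * exp (-y)) = ennreal (y powr p) * (\<integral>\<^sup>+t. ennreal (exp (-t)) * indicator {y..} t \<partial>lborel)"
    using tail y by (simp add: ennreal_mult)
  also have "\<dots> = (\<integral>\<^sup>+t. ennreal (y powr p) * (ennreal (exp (-t)) * indicator {y..} t) \<partial>lborel)"
    by (rule nn_integral_cmult[symmetric]) auto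
  also have "\<dots> \<le> (\<integral>\<^sup>+t. ennreal (indicator {0..} t * t powr (p + 1 - 1) / exp t) \<partial>lborel)"
  proof (rule nn_integral_mono)
    fix t
    show "ennreal (y powr p) * (ennreal (exp (-t)) * indicator {y..} t)
        \<le> ennreal (indicator {0..} t * t powr (p + 1 - 1) / exp t)"
    proof (cases "y \<le> t")
      case True
      have "y powr p \<le> t powr p" using True y p by (intro powr_mono2) auto
      hence "y powr p * exp (-t) \<le> t powr p / exp t" by (simp add: exp_minus divide_inverse mult_right_mono)
      then show ?thesis using True y by (simp add: ennreal_mult[symmetric])
    qed auto
  qed
  also have "\<dots> = Gamma (p + 1)" using p by (subst Gamma_conv_nn_integral_real) auto
  finally show ?thesis using Gamma_real_pos[of "p + 1"] p by (simp add: ennreal_le_iff)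
qed

lemma exp_le_taylor2_nonpos:
  fixes w :: real assumes "w \<le> 0" shows "exp w \<le> 1 + w + w^2/2"
proof -
  define g where "g = (\<lambda>w::real. 1 + w + w^2/2 - exp w)"
  have "g 0 \<le> g w"
  proof (rule DERIV_nonpos_imp_nonincreasing[of w 0 g])
    fix x assume "w \<le> x" "x \<le> 0"
    show "\<exists>y. DERIV g x :> y \<and> y \<le> 0"
      by (rule exI[of _ "1 + x - exp x"]) (auto simp: g_def intro!: derivative_eq_intros)
  qed fact
  then show ?thesis by (simp add: g_def)
qed

lemma exp_le_taylor2_nonneg:
  fixes w :: real assumes "w \<ge> 0" shows "exp w \<le> 1 + w + w^2/2 * exp w"
proof -
  define g where "g = (\<lambda>w::real. 1 + w + w^2/2 * exp w - exp w)"
  have "g 0 \<le> g w"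
  proof (rule DERIV_nonneg_imp_nondecreasing[of 0 w g])
    fix x :: real assume "0 \<le> x" "x \<le> w"
    have "1 - x \<le> exp (-x)" using exp_ge_add_one_self[of "-x"] by simp
    hence "exp x - x * exp x \<le> 1" by (simp add: exp_minus field_simps)
    moreover have "0 \<le> x^2/2 * exp x" by simp
    ultimately have "0 \<le> 1 + x * exp x + x^2/2 * exp x - exp x" by linarith
    then show "\<exists>y. DERIV g x :> y \<and> 0 \<le> y"
      by (intro exI[of _ "1 + x * exp x + x^2/2 * exp x - exp x"] conjI)
         (auto simp: g_def power2_eq_square algebra_simps intro!: derivative_eq_intros)
  qed fact
  then show ?thesis by (simp add: g_def)
qed

lemma exp_le_taylor2:
  fixes w :: real shows "exp w \<le> 1 + w + w^2/2 * exp (max w 0)"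
  using exp_le_taylor2_nonneg[of w] exp_le_taylor2_nonpos[of w] by (cases "w \<ge> 0") (auto simp: max_def)

lemma mult_exp_half_le: fixes z :: real shows "z * exp (z/2) \<le> 2 / exp 1 * exp z"
proof -
  have "z/2 \<le> exp (z/2 - 1)" using exp_ge_add_one_self[of "z/2 - 1"] by simp
  then have "z \<le> 2 * exp (z/2) / exp 1" by (simp add: exp_diff mult.commute)
  then have "z * exp (z/2) \<le> 2 * exp (z/2) / exp 1 * exp (z/2)" by (rule mult_right_mono) simp
  also have "\<dots> = 2 / exp 1 * exp z" by (simp add: mult_exp_exp)
  finally show ?thesis .
qed

text \<open>The Taylor remainder \<open>(\<lambda>x)\<^sup>2/2 \<cdot> exp (\<lambda>x)\<close> is split by AM-GM, \<open>\<lambda>\<bar>x\<bar> \<le> (\<lambda>\<^sup>2m\<^sup>2 + x\<^sup>2/m\<^sup>2)/2\<close>,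
  into a factor depending on \<open>\<lambda>m\<close> only and a factor controlled by \<open>exp (x\<^sup>2/m\<^sup>2)\<close>.\<close>
lemma exp_le_subgaussian:
  fixes lam m x :: real assumes lam: "lam \<ge> 0" and m: "m > 0"
  shows "exp (lam * x) \<le> 1 + lam * x + (lam^2 * m^2 * exp (lam^2 * m^2 / 2) / exp 1) * exp ((x/m)^2)"
proof -
  define a where "a = lam^2 * m^2"
  define z where "z = (x/m)^2"
  define w where "w = lam * x"
  have a0: "a \<ge> 0" and z0: "z \<ge> 0" unfolding a_def z_def by simp_all
  have "0 \<le> (lam * m - \<bar>x\<bar>/m)^2" by simp
  also have "(lam * m - \<bar>x\<bar>/m)^2 = a - 2 * lam * \<bar>x\<bar> + z"
    unfolding a_def z_def using m by (simp add: power2_eq_square field_simps)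
  finally have "lam * \<bar>x\<bar> \<le> (a + z)/2" by simp
  moreover have "max w 0 \<le> lam * \<bar>x\<bar>" unfolding w_def using lam by (auto simp: max_def abs_if mult_left_mono)
  ultimately have wmax: "max w 0 \<le> (a + z)/2" by linarith
  have w2: "w^2 = a * z" unfolding w_def a_def z_def using m by (simp add: power_mult_distrib power_divide)
  have "w^2/2 * exp (max w 0) \<le> a * z/2 * exp ((a + z)/2)"
    using wmax w2 a0 z0 by (auto intro!: mult_left_mono)
  also have "\<dots> = a/2 * exp (a/2) * (z * exp (z/2))" by (simp add: add_divide_distrib exp_add)
  also have "\<dots> \<le> a/2 * exp (a/2) * (2 / exp 1 * exp z)"
    using a0 by (intro mult_left_mono mult_exp_half_le) auto
  finally have "w^2/2 * exp (max w 0) \<le> (a * exp (a/2) / exp 1) * exp z" by simp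
  then show ?thesis using exp_le_taylor2[of w] unfolding w_def a_def z_def by linarith
qed

lemma one_add_mult_exp_half_le_exp:
  fixes a :: real assumes "a \<ge> 0"
  shows "1 + 2 * (a * exp (a/2) / exp 1) \<le> exp (4 * a)"
proof -
  have "a * (exp (a/2) / exp 1) \<le> a * exp (2 * a)"
    using assms by (intro mult_left_mono) (auto simp: exp_diff[symmetric])
  then have "2 * (a * exp (a/2) / exp 1) \<le> 2 * a * exp (2 * a)" by simp
  moreover have "1 \<le> exp (2 * a)" using assms by simp
  ultimately have "1 + 2 * (a * exp (a/2) / exp 1) \<le> exp (2 * a) + 2 * a * exp (2 * a)" by linarith
  also have "\<dots> = (1 + 2 * a) * exp (2 * a)" by (simp add: algebra_simps)
  also have "\<dots> \<le> exp (2 * a) * exp (2 * a)"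
    using exp_ge_add_one_self[of "2 * a"] by (intro mult_right_mono) auto
  also have "\<dots> = exp (4 * a)" by (simp add: mult_exp_exp)
  finally show ?thesis .
qed

text \<open>\<open>4 \<cdot> weibull_mgf_const \<theta>\<close> is the constant \<open>C\<^sub>1\<close> of the theorem.\<close>
definition weibull_mgf_const :: "real \<Rightarrow> real" where
  "weibull_mgf_const \<theta> = 2 powr (3 * \<theta> - 1) * Gamma (3 * \<theta> + 1)"

lemma weibull_mgf_const_pos: "\<theta> \<ge> 1 \<Longrightarrow> weibull_mgf_const \<theta> > 0"
  by (simp add: weibull_mgf_const_def Gamma_real_pos)

lemma powr_le_weibull_mgf_const:
  fixes z th :: real assumes th: "th \<ge> 1" and z: "z \<ge> 0"
  shows "z powr (2 * th) \<le> weibull_mgf_const th * exp (z/2)"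
proof (cases "z powr th \<ge> 2")
  case True
  have g: "(z/2) powr (3 * th) * exp (-(z/2)) \<le> Gamma (3 * th + 1)"
    using th z by (intro powr_mult_exp_neg_le_Gamma) auto
  have "z powr (2 * th) \<le> z powr (2 * th) * z powr th / 2"
    using True mult_left_mono[OF True, of "z powr (2 * th)"] by simp
  also have "\<dots> = 2 powr (3 * th - 1) * (z/2) powr (3 * th)"
  proof -
    have "2 powr (3 * th - 1) * (z/2) powr (3 * th) = z powr (3 * th) / 2"
      using z by (simp add: powr_divide powr_diff field_simps)
    also have "z powr (3 * th) = z powr (2 * th) * z powr th" by (simp add: powr_add[symmetric])
    finally show ?thesis by simp
  qed
  also have "\<dots> = 2 powr (3 * th - 1) * ((z/2) powr (3 * th) * exp (-(z/2))) * exp (z/2)"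
    by (simp add: exp_minus)
  also have "\<dots> \<le> 2 powr (3 * th - 1) * Gamma (3 * th + 1) * exp (z/2)"
    using g by (intro mult_right_mono mult_left_mono) auto
  finally show ?thesis unfolding weibull_mgf_const_def .
next
  case False
  have "z powr (2 * th) = (z powr th)^2"
    using z by (simp add: powr_powr[symmetric] powr_realpow[symmetric] mult.commute)
  also have "\<dots> \<le> 2^2" using False by (intro power_mono) auto
  finally have small: "z powr (2 * th) \<le> 4" by simp
  have "exp (2::real) = exp 1 * exp 1" by (simp add: mult_exp_exp)
  also have "\<dots> \<le> 2.72 * 2.72" using e_less_272 by (intro mult_mono) auto
  finally have e2: "exp (2::real) \<le> 8" by simp
  have "(32::real) = 2 powr 5" by simp
  also have "\<dots> \<le> 2 powr (6 * th - 1)" using th by (intro powr_mono) auto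
  also have "\<dots> = 2 powr (3 * th - 1) * 2 powr (3 * th)" by (simp add: powr_add[symmetric])
  finally have "4 \<le> 2 powr (3 * th - 1) * (2 powr (3 * th) * exp (-2))"
    using e2 by (simp add: exp_minus field_simps)
  also have "\<dots> \<le> weibull_mgf_const th"
    unfolding weibull_mgf_const_def using powr_mult_exp_neg_le_Gamma[of "3 * th" 2] th
    by (intro mult_left_mono) auto
  also have "\<dots> \<le> weibull_mgf_const th * exp (z/2)"
    using weibull_mgf_const_pos[OF th] z by simp
  finally show ?thesis using small by linarith
qed

text \<open>Here \<open>y\<close> is a truncation of \<open>x\<close>; the hypothesis on positive \<open>y\<close> keeps \<open>exp (\<lambda>y)\<close> below
  \<open>exp (z/2)\<close> with \<open>z = (\<bar>x\<bar>/m) powr (1/\<theta>)\<close>, and the other \<open>exp (z/2)\<close> pays for \<open>z powr (2\<theta>)\<close>.\<close>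
lemma exp_le_subweibull:
  fixes th lam m x y :: real
  assumes th: "th \<ge> 1" and lam: "lam \<ge> 0" and m: "m > 0" and yx: "\<bar>y\<bar> \<le> \<bar>x\<bar>"
    and small: "y > 0 \<Longrightarrow> lam * y \<le> (\<bar>x\<bar>/m) powr (1/th) / 2"
  shows "exp (lam * y) \<le> 1 + lam * y + (lam^2 * m^2 * weibull_mgf_const th / 2) * exp ((\<bar>x\<bar>/m) powr (1/th))"
proof -
  define z where "z = (\<bar>x\<bar>/m) powr (1/th)"
  define w where "w = lam * y"
  have z0: "z \<ge> 0" unfolding z_def by simp
  have wmax: "max w 0 \<le> z/2" using small z0 lam unfolding w_def z_def
    by (cases "y > 0") (auto simp: max_def mult_nonneg_nonpos)
  have "z powr (2 * th) = (\<bar>x\<bar>/m) powr ((1/th) * (2 * th))" unfolding z_def by (simp add: powr_powr)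
  also have "\<dots> = x^2/m^2" using th m by (simp add: power_divide)
  finally have zx: "z powr (2 * th) = x^2/m^2" .
  have "w^2 \<le> lam^2 * x^2" unfolding w_def using yx
    by (simp add: power_mult_distrib mult_left_mono abs_le_square_iff)
  also have "\<dots> = lam^2 * m^2 * z powr (2 * th)" using zx m by simp
  finally have "w^2/2 * exp (max w 0) \<le> lam^2 * m^2 * z powr (2 * th) / 2 * exp (z/2)"
    using wmax by (intro mult_mono divide_right_mono) auto
  also have "\<dots> \<le> lam^2 * m^2 * (weibull_mgf_const th * exp (z/2)) / 2 * exp (z/2)"
    using powr_le_weibull_mgf_const[OF th z0] by (intro mult_right_mono divide_right_mono mult_left_mono) auto
  also have "\<dots> = (lam^2 * m^2 * weibull_mgf_const th / 2) * exp z" by (simp add: mult_exp_exp)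
  finally show ?thesis using exp_le_taylor2[of w] unfolding w_def z_def by linarith
qed

lemma sigma_finite_subalgebra_of_prob_space:
  "prob_space M \<Longrightarrow> subalgebra M G \<Longrightarrow> sigma_finite_subalgebra M G"
  by (rule finite_measure_subalgebra_is_sigma_finite)
     (simp add: finite_measure_subalgebra_def finite_measure_subalgebra_axioms_def prob_space_def)

lemma ennreal_eq_ennreal_max_0: "ennreal y = ennreal (max y 0)"
  by (simp add: max_def ennreal_neg)

context sigma_finite_subalgebra
begin

lemma nn_cond_exp_const: "AE x in M. nn_cond_exp M F (\<lambda>_. c) x = c"
  using nn_cond_exp_F_meas[of "\<lambda>_. c"] by auto

lemma nn_cond_exp_add_cmult:
  assumes "f \<in> borel_measurable M" "g \<in> borel_measurable M"
  shows "AE x in M. nn_cond_exp M F (\<lambda>x. f x + c * g x) x = nn_cond_exp M F f x + c * nn_cond_exp M F g x"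
proof -
  have "AE x in M. nn_cond_exp M F f x + nn_cond_exp M F (\<lambda>x. c * g x) x = nn_cond_exp M F (\<lambda>x. f x + c * g x) x"
    using assms by (intro nn_cond_exp_sum) auto
  moreover have "AE x in M. nn_cond_exp M F (\<lambda>x. c * g x) x = c * nn_cond_exp M F g x"
    using nn_cond_exp_prod[of "\<lambda>_. c" g] assms by auto
  ultimately show ?thesis by eventually_elim simp
qed

lemma nn_cond_exp_ennreal_finite:
  assumes "integrable M f"
  shows "AE x in M. nn_cond_exp M F (\<lambda>x. ennreal (f x)) x \<noteq> \<infinity>"
proof (rule nn_integral_noteq_infinite)
  have [measurable]: "f \<in> borel_measurable M" using assms by auto
  have "(\<integral>\<^sup>+x. nn_cond_exp M F (\<lambda>x. ennreal (f x)) x \<partial>M) = (\<integral>\<^sup>+x. 1 * nn_cond_exp M F (\<lambda>x. ennreal (f x)) x \<partial>M)"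
    by simp
  also have "\<dots> = (\<integral>\<^sup>+x. 1 * ennreal (f x) \<partial>M)" by (rule nn_cond_exp_intg) auto
  also have "\<dots> \<noteq> \<infinity>" using assms by auto
  finally show "(\<integral>\<^sup>+x. nn_cond_exp M F (\<lambda>x. ennreal (f x)) x \<partial>M) \<noteq> \<infinity>" .
qed simp

text \<open>\<open>real_cond_exp\<close> is the difference of the conditional expectations of the positive and
  negative parts, and both are finite for integrable \<open>X\<close>.\<close>
lemma nn_cond_exp_pos_part_eq_neg_part:
  assumes "integrable M X" "AE x in M. real_cond_exp M F X x = 0"
  shows "AE x in M. nn_cond_exp M F (\<lambda>x. ennreal (X x)) x = nn_cond_exp M F (\<lambda>x. ennreal (- X x)) x"
  using nn_cond_exp_ennreal_finite[OF assms(1)] nn_cond_exp_ennreal_finite[OF integrable_minus[OF assms(1)]] assms(2)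
proof eventually_elim
  case (elim x)
  then have "enn2real (nn_cond_exp M F (\<lambda>x. ennreal (X x)) x) = enn2real (nn_cond_exp M F (\<lambda>x. ennreal (- X x)) x)"
    by (simp add: real_cond_exp_def)
  then have "ennreal (enn2real (nn_cond_exp M F (\<lambda>x. ennreal (X x)) x))
      = ennreal (enn2real (nn_cond_exp M F (\<lambda>x. ennreal (- X x)) x))" by simp
  then show ?case using elim(1,2) by (simp add: ennreal_enn2real_if)
qed

text \<open>The linear term \<open>\<lambda>Y\<close> of the pointwise bound is dominated by \<open>\<lambda>X\<close> on its positive part and
  equals it on its negative part, and \<open>X\<close> has conditional mean zero. Since \<open>nn_cond_exp\<close> only handles
  nonnegative functions, both parts are moved to the side where they occur positively and the
  (finite) conditional mean of the negative part is cancelled at the end.\<close>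
lemma nn_cond_exp_exp_le:
  fixes X Y Z :: "'a \<Rightarrow> real"
  assumes X: "integrable M X" "AE x in M. real_cond_exp M F X x = 0"
    and [measurable]: "Y \<in> borel_measurable M" "Z \<in> borel_measurable M"
    and Z: "AE x in M. nn_cond_exp M F (\<lambda>x. ennreal (exp (Z x))) x \<le> 2"
    and lam: "lam \<ge> 0" and d: "d \<ge> 0"
    and pointwise: "\<And>x. x \<in> space M \<Longrightarrow> exp (lam * Y x) \<le> 1 + lam * Y x + d * exp (Z x)"
    and Y_le: "\<And>x. x \<in> space M \<Longrightarrow> Y x \<le> X x"
    and Y_neg: "\<And>x. x \<in> space M \<Longrightarrow> min (Y x) 0 = min (X x) 0"
  shows "AE x in M. nn_cond_exp M F (\<lambda>x. ennreal (exp (lam * Y x))) x \<le> ennreal (1 + 2 * d)"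
proof -
  have [measurable]: "X \<in> borel_measurable M" using X by auto
  define E where "E = (\<lambda>x. ennreal (exp (lam * Y x)))"
  define Yp where "Yp = (\<lambda>x. ennreal (Y x))"
  define Xp where "Xp = (\<lambda>x. ennreal (X x))"
  define Xm where "Xm = (\<lambda>x. ennreal (- X x))"
  define Ez where "Ez = (\<lambda>x. ennreal (exp (Z x)))"
  have [measurable]: "E \<in> borel_measurable M" "Yp \<in> borel_measurable M" "Xp \<in> borel_measurable M"
    "Xm \<in> borel_measurable M" "Ez \<in> borel_measurable M"
    unfolding E_def Yp_def Xp_def Xm_def Ez_def by auto
  have ennreal_pointwise: "E x + ennreal lam * Xm x \<le> 1 + ennreal lam * Yp x + ennreal d * Ez x"
    if x: "x \<in> space M" for x
  proof -
    have "lam * Y x = lam * max (Y x) 0 - lam * max (- X x) 0"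
      using Y_neg[OF x] by (auto simp: max_def min_def algebra_simps split: if_splits)
    then have "exp (lam * Y x) + lam * max (- X x) 0 \<le> 1 + lam * max (Y x) 0 + d * exp (Z x)"
      using pointwise[OF x] by linarith
    then have "ennreal (exp (lam * Y x) + lam * max (- X x) 0) \<le> ennreal (1 + lam * max (Y x) 0 + d * exp (Z x))"
      by (rule ennreal_leI)
    moreover have "Xm x = ennreal (max (- X x) 0)" "Yp x = ennreal (max (Y x) 0)"
      unfolding Xm_def Yp_def by (rule ennreal_eq_ennreal_max_0)+
    ultimately show ?thesis
      unfolding E_def Ez_def using lam d by (simp add: ennreal_plus ennreal_mult)
  qed
  have mono: "AE x in M. nn_cond_exp M F (\<lambda>x. E x + ennreal lam * Xm x) x
      \<le> nn_cond_exp M F (\<lambda>x. 1 + ennreal lam * Yp x + ennreal d * Ez x) x"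
    by (rule nn_cond_exp_mono) (auto intro!: AE_I2 ennreal_pointwise)
  have lhs: "AE x in M. nn_cond_exp M F (\<lambda>x. E x + ennreal lam * Xm x) x
      = nn_cond_exp M F E x + ennreal lam * nn_cond_exp M F Xm x"
    by (rule nn_cond_exp_add_cmult) auto
  have "AE x in M. nn_cond_exp M F (\<lambda>x. 1 + ennreal lam * Yp x + ennreal d * Ez x) x
      = nn_cond_exp M F (\<lambda>x. 1 + ennreal lam * Yp x) x + ennreal d * nn_cond_exp M F Ez x"
    by (rule nn_cond_exp_add_cmult) auto
  moreover have "AE x in M. nn_cond_exp M F (\<lambda>x. 1 + ennreal lam * Yp x) x
      = nn_cond_exp M F (\<lambda>_. 1) x + ennreal lam * nn_cond_exp M F Yp x"
    by (rule nn_cond_exp_add_cmult) auto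
  ultimately have rhs: "AE x in M. nn_cond_exp M F (\<lambda>x. 1 + ennreal lam * Yp x + ennreal d * Ez x) x
      = 1 + ennreal lam * nn_cond_exp M F Yp x + ennreal d * nn_cond_exp M F Ez x"
    using nn_cond_exp_const[of 1] by eventually_elim simp
  have Yp_le: "AE x in M. nn_cond_exp M F Yp x \<le> nn_cond_exp M F Xp x"
    by (rule nn_cond_exp_mono) (auto intro!: AE_I2 simp: Yp_def Xp_def Y_le ennreal_leI)
  have Xp_eq: "AE x in M. nn_cond_exp M F Xp x = nn_cond_exp M F Xm x"
    using nn_cond_exp_pos_part_eq_neg_part[OF X] unfolding Xp_def Xm_def .
  have Xm_finite: "AE x in M. nn_cond_exp M F Xm x \<noteq> \<infinity>"
    using nn_cond_exp_ennreal_finite[of "\<lambda>x. - X x"] X unfolding Xm_def by auto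
  show ?thesis
    using mono lhs rhs Yp_le Xp_eq Xm_finite Z
  proof eventually_elim
    case (elim x)
    let ?a = "ennreal lam * nn_cond_exp M F Xm x"
    have "nn_cond_exp M F E x + ?a \<le> 1 + ennreal lam * nn_cond_exp M F Yp x + ennreal d * nn_cond_exp M F Ez x"
      using elim(1-3) by simp
    also have "\<dots> \<le> 1 + ?a + ennreal d * 2"
      using elim(4,5,7) unfolding Ez_def by (intro add_mono mult_left_mono) auto
    finally have "nn_cond_exp M F E x + ?a \<le> (1 + ennreal d * 2) + ?a"
      by (simp add: algebra_simps)
    moreover have "?a \<noteq> \<infinity>" using elim(6) by (simp add: ennreal_mult_eq_top_iff)
    ultimately have "nn_cond_exp M F E x \<le> 1 + ennreal d * 2"
      by (metis add.commute ennreal_add_left_cancel_le)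
    also have "1 + ennreal d * 2 = ennreal (1 + 2 * d)"
      using d by (simp add: ennreal_plus ennreal_mult mult.commute)
    finally show ?case unfolding E_def .
  qed
qed

lemma nn_integral_mult_le_of_nn_cond_exp_le:
  assumes [measurable]: "G \<in> borel_measurable F" "V \<in> borel_measurable M"
    and "AE x in M. nn_cond_exp M F V x \<le> c"
  shows "(\<integral>\<^sup>+x. G x * V x \<partial>M) \<le> (\<integral>\<^sup>+x. G x * c \<partial>M)"
proof -
  have "(\<integral>\<^sup>+x. G x * V x \<partial>M) = (\<integral>\<^sup>+x. G x * nn_cond_exp M F V x \<partial>M)"
    by (rule nn_cond_exp_intg[symmetric]) auto
  also have "\<dots> \<le> (\<integral>\<^sup>+x. G x * c \<partial>M)"
    using assms(3) by (intro nn_integral_mono_AE) (auto elim!: AE_mp intro!: mult_left_mono)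
  finally show ?thesis .
qed

lemma prob_exp_ge_le:
  assumes "prob_space M" and [measurable]: "Z \<in> borel_measurable M"
    and bound: "AE x in M. nn_cond_exp M F (\<lambda>y. ennreal (exp (Z y))) x \<le> 2"
  shows "measure M {x\<in>space M. Z x \<ge> t} \<le> 2 * exp (-t)"
proof -
  interpret prob_space M by fact
  define A where "A = {x\<in>space M. Z x \<ge> t}"
  have [measurable]: "A \<in> sets M" unfolding A_def by measurable
  have "ennreal (exp t) * emeasure M A = (\<integral>\<^sup>+x. ennreal (exp t) * indicator A x \<partial>M)"
    by (simp add: nn_integral_cmult_indicator)
  also have "\<dots> \<le> (\<integral>\<^sup>+x. 1 * ennreal (exp (Z x)) \<partial>M)"
    by (intro nn_integral_mono) (auto simp: A_def indicator_def)
  also have "\<dots> \<le> (\<integral>\<^sup>+x. 1 * 2 \<partial>M)"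
    by (rule nn_integral_mult_le_of_nn_cond_exp_le[OF _ _ bound]) auto
  also have "\<dots> = 2" by (simp add: emeasure_space_1)
  finally have "ennreal (exp t * measure M A) \<le> ennreal 2"
    by (simp add: emeasure_eq_measure ennreal_mult)
  then have "exp t * measure M A \<le> 2" by (subst (asm) ennreal_le_iff) auto
  then show ?thesis unfolding A_def by (simp add: exp_minus field_simps)
qed

end

text \<open>Optional stopping at the first exit from a decreasing family of sets \<open>B k\<close>: if \<open>Z\<close> does not
  increase in mean on each \<open>B k\<close>, then neither does \<open>Z\<close> stopped at the exit time.\<close>
lemma nn_integral_stopped_at_exit_le:
  fixes Z :: "nat \<Rightarrow> 'a \<Rightarrow> real" and B :: "nat \<Rightarrow> 'a set"
  assumes [measurable]: "\<And>t. Z t \<in> borel_measurable M" "\<And>k. B k \<in> sets M"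
    and B_Suc: "\<And>k. B (Suc k) \<subseteq> B k"
    and step: "\<And>k. k < n \<Longrightarrow> (\<integral>\<^sup>+x. indicator (B k) x * ennreal (Z (Suc k) x) \<partial>M)
                                \<le> (\<integral>\<^sup>+x. indicator (B k) x * ennreal (Z k x) \<partial>M)"
  shows "(\<integral>\<^sup>+x. (\<Sum>t=1..n. indicator (B (t - 1) - B t) x * ennreal (Z t x))
              + indicator (B n) x * ennreal (Z n x) \<partial>M)
         \<le> (\<integral>\<^sup>+x. indicator (B 0) x * ennreal (Z 0 x) \<partial>M)"
  using step
proof (induction n)
  case (Suc k)
  define R where "R = (\<lambda>x. \<Sum>t=1..k. indicator (B (t - 1) - B t) x * ennreal (Z t x))"
  have [measurable]: "R \<in> borel_measurable M" unfolding R_def by measurable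
  have exit_or_stay: "indicator (B k - B (Suc k)) x * e + indicator (B (Suc k)) x * e = indicator (B k) x * e"
    for x and e :: ennreal
    using B_Suc[of k] by (auto simp: indicator_def)
  have "(\<integral>\<^sup>+x. (\<Sum>t=1..Suc k. indicator (B (t - 1) - B t) x * ennreal (Z t x))
          + indicator (B (Suc k)) x * ennreal (Z (Suc k) x) \<partial>M)
      = (\<integral>\<^sup>+x. R x + indicator (B k) x * ennreal (Z (Suc k) x) \<partial>M)"
    by (intro nn_integral_cong) (simp add: R_def add.assoc exit_or_stay)
  also have "\<dots> = (\<integral>\<^sup>+x. R x \<partial>M) + (\<integral>\<^sup>+x. indicator (B k) x * ennreal (Z (Suc k) x) \<partial>M)"
    by (rule nn_integral_add) auto
  also have "\<dots> \<le> (\<integral>\<^sup>+x. R x \<partial>M) + (\<integral>\<^sup>+x. indicator (B k) x * ennreal (Z k x) \<partial>M)"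
    using Suc.prems[of k] by (intro add_left_mono) simp
  also have "\<dots> = (\<integral>\<^sup>+x. R x + indicator (B k) x * ennreal (Z k x) \<partial>M)"
    by (rule nn_integral_add[symmetric]) auto
  also have "\<dots> \<le> (\<integral>\<^sup>+x. indicator (B 0) x * ennreal (Z 0 x) \<partial>M)"
    unfolding R_def by (rule Suc.IH) (use Suc.prems in simp)
  finally show ?case .
qed simp

lemma exists_first_passage:
  fixes S :: "nat \<Rightarrow> real"
  assumes "\<exists>t\<in>{1..n}. S t \<ge> u"
  shows "\<exists>t\<in>{1..n}. S t \<ge> u \<and> (\<forall>t'\<in>{1..t - 1}. S t' < u)"
proof -
  define t0 where "t0 = (LEAST t. t \<in> {1..n} \<and> S t \<ge> u)"
  from assms have "\<exists>t. t \<in> {1..n} \<and> S t \<ge> u" by blast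
  then have t0: "t0 \<in> {1..n} \<and> S t0 \<ge> u" unfolding t0_def by (rule LeastI_ex)
  have "S t' < u" if t': "t' \<in> {1..t0 - 1}" for t'
  proof (rule ccontr)
    assume "\<not> S t' < u"
    then have "t0 \<le> t'" unfolding t0_def using t' t0 by (intro Least_le) auto
    then show False using t' t0 by auto
  qed
  with t0 show ?thesis by blast
qed

text \<open>Chernoff bound for the running maximum: \<open>Z t = exp (\<lambda> S t) / \<Prod>i\<le>t. c i\<close> does not
  increase in mean on events of \<open>F t\<close>, and on the first-passage event \<open>B (t - 1) - B t\<close> it is at least
  \<open>exp (\<lambda>u) / \<Prod>i\<le>n. c i\<close>. Taking \<open>min t n\<close> in \<open>S\<close> keeps every \<open>S t\<close> measurable.\<close>
lemma prob_exists_partial_sum_ge_le: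
  fixes M :: "'a measure" and F :: "nat \<Rightarrow> 'a measure" and Y :: "nat \<Rightarrow> 'a \<Rightarrow> real"
    and c :: "nat \<Rightarrow> real" and lam u :: real and n :: nat
  assumes P: "prob_space M" and filt: "filtration_upto M n F"
    and adapted: "\<And>i. i \<in> {1..n} \<Longrightarrow> Y i \<in> borel_measurable (F i)"
    and lam: "lam \<ge> 0"
    and c: "\<And>i. i \<in> {1..n} \<Longrightarrow> c i \<ge> 1"
    and mgf: "\<And>i. i \<in> {1..n} \<Longrightarrow>
      AE x in M. nn_cond_exp M (F (i - 1)) (\<lambda>x. ennreal (exp (lam * Y i x))) x \<le> ennreal (c i)"
  shows "measure M {x\<in>space M. \<exists>t\<in>{1..n}. (\<Sum>i=1..t. Y i x) \<ge> u} \<le> exp (- lam * u) * (\<Prod>i=1..n. c i)"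
proof -
  interpret prob_space M by fact
  have sub: "\<And>i. i \<le> n \<Longrightarrow> subalgebra M (F i)"
    and mono: "\<And>i j. i \<le> j \<Longrightarrow> j \<le> n \<Longrightarrow> sets (F i) \<subseteq> sets (F j)"
    using filt unfolding filtration_upto_def by auto
  define S where "S = (\<lambda>t x. \<Sum>i=1..min t n. Y i x)"
  define Pc where "Pc = (\<lambda>t. \<Prod>i=1..min t n. c i)"
  define Z where "Z = (\<lambda>t x. exp (lam * S t x) / Pc t)"
  define B where "B = (\<lambda>k. {x\<in>space M. \<forall>t\<in>{1..k}. S t x < u})"
  have Pc_pos: "Pc t > 0" for t
    unfolding Pc_def using c by (intro prod_pos) (auto intro: less_le_trans[OF zero_less_one])
  have Pc_le: "Pc t \<le> Pc n" for t
  proof -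
    have "Pc n = Pc t * (\<Prod>i\<in>{min t n + 1..n}. c i)"
      unfolding Pc_def by (subst prod.union_disjoint[symmetric]) (auto intro!: prod.cong)
    moreover have "(\<Prod>i\<in>{min t n + 1..n}. c i) \<ge> 1" using c by (intro prod_ge_1) auto
    ultimately show ?thesis using Pc_pos[of t] by (simp add: mult_le_cancel_left1)
  qed
  have space_F: "space (F k) = space M" if "k \<le> n" for k using sub[OF that] by (simp add: subalgebra_def)
  have S_F: "S t \<in> borel_measurable (F k)" if "t \<le> k" "k \<le> n" for t k
  proof -
    have "Y i \<in> borel_measurable (F k)" if "i \<in> {1..min t n}" for i
    proof -
      have "subalgebra (F k) (F i)" using mono[of i k] that \<open>t \<le> k\<close> \<open>k \<le> n\<close> space_F sub[of i]
        by (auto simp: subalgebra_def)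
      then show ?thesis using adapted[of i] that \<open>k \<le> n\<close> by (auto intro: measurable_from_subalg)
    qed
    then show ?thesis unfolding S_def by (intro borel_measurable_sum) auto
  qed
  have [measurable]: "S t \<in> borel_measurable M" for t
    unfolding S_def using adapted by (intro borel_measurable_sum) (auto intro!: measurable_from_subalg[OF sub])
  have [measurable]: "B k \<in> sets M" "Z k \<in> borel_measurable M" for k
    unfolding B_def Z_def by measurable
  have step: "(\<integral>\<^sup>+x. indicator (B k) x * ennreal (Z (Suc k) x) \<partial>M)
      \<le> (\<integral>\<^sup>+x. indicator (B k) x * ennreal (Z k x) \<partial>M)" if k: "k < n" for k
  proof -
    interpret sf: sigma_finite_subalgebra M "F k"
      using sigma_finite_subalgebra_of_prob_space[OF P sub[of k]] k by simp
    have k_le: "k \<le> n" using k by simp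
    have "B k = {x\<in>space (F k). \<forall>t\<in>{1..k}. S t x < u}" unfolding B_def using space_F k by simp
    also have "\<dots> \<in> sets (F k)" using S_F k_le by measurable
    finally have [measurable]: "B k \<in> sets (F k)" .
    have [measurable]: "S k \<in> borel_measurable (F k)" using S_F k by simp
    have [measurable]: "Y (Suc k) \<in> borel_measurable M"
      using adapted[of "Suc k"] k by (intro measurable_from_subalg[OF sub[of "Suc k"]]) auto
    have "Z (Suc k) x = Z k x / c (Suc k) * exp (lam * Y (Suc k) x)" for x
      unfolding Z_def S_def Pc_def using k by (simp add: distrib_left exp_add field_simps)
    then have "indicator (B k) x * ennreal (Z (Suc k) x)
        = ennreal (indicator (B k) x * Z k x / c (Suc k)) * ennreal (exp (lam * Y (Suc k) x))" for x
      using Pc_pos[of k] c[of "Suc k"] k by (simp add: Z_def indicator_def ennreal_mult[symmetric])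
    then have "(\<integral>\<^sup>+x. indicator (B k) x * ennreal (Z (Suc k) x) \<partial>M)
        \<le> (\<integral>\<^sup>+x. ennreal (indicator (B k) x * Z k x / c (Suc k)) * ennreal (c (Suc k)) \<partial>M)"
      using mgf[of "Suc k"] k by (simp only:) (intro sf.nn_integral_mult_le_of_nn_cond_exp_le; simp add: Z_def)
    also have "\<dots> = (\<integral>\<^sup>+x. indicator (B k) x * ennreal (Z k x) \<partial>M)"
      using Pc_pos[of k] c[of "Suc k"] k
      by (intro nn_integral_cong) (simp add: Z_def indicator_def ennreal_mult[symmetric])
    finally show ?thesis .
  qed
  define E where "E = {x\<in>space M. \<exists>t\<in>{1..n}. S t x \<ge> u}"
  have [measurable]: "E \<in> sets M" unfolding E_def by measurable
  define K where "K = exp (lam * u) / Pc n"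
  have K_pos: "K > 0" unfolding K_def using Pc_pos[of n] by simp
  have E_le: "ennreal K * indicator E x
      \<le> (\<Sum>t=1..n. indicator (B (t - 1) - B t) x * ennreal (Z t x)) + indicator (B n) x * ennreal (Z n x)" for x
  proof (cases "x \<in> E")
    case True
    then have x: "x \<in> space M" and "\<exists>t\<in>{1..n}. S t x \<ge> u" unfolding E_def by auto
    from exists_first_passage[OF this(2)] obtain t where t: "t \<in> {1..n}" "S t x \<ge> u"
      and before: "\<forall>t'\<in>{1..t - 1}. S t' x < u" by auto
    have "x \<in> B (t - 1)" unfolding B_def using x before by auto
    moreover have "x \<notin> B t" unfolding B_def using t by (auto intro!: bexI[of _ t])
    ultimately have x_exit: "x \<in> B (t - 1) - B t" by simp
    have "exp (lam * u) \<le> exp (lam * S t x)" using t lam by (auto intro: mult_left_mono)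
    then have "K \<le> Z t x" unfolding K_def Z_def using Pc_le[of t] Pc_pos[of t] by (intro frac_le) auto
    then have "ennreal K * indicator E x \<le> indicator (B (t - 1) - B t) x * ennreal (Z t x)"
      using x_exit True by (simp add: ennreal_leI)
    also have "\<dots> \<le> (\<Sum>t=1..n. indicator (B (t - 1) - B t) x * ennreal (Z t x))"
      using t by (intro member_le_sum) auto
    finally show ?thesis by (simp add: add_increasing2)
  qed simp
  have "ennreal K * emeasure M E = (\<integral>\<^sup>+x. ennreal K * indicator E x \<partial>M)"
    by (simp add: nn_integral_cmult_indicator)
  also have "\<dots> \<le> (\<integral>\<^sup>+x. (\<Sum>t=1..n. indicator (B (t - 1) - B t) x * ennreal (Z t x))
      + indicator (B n) x * ennreal (Z n x) \<partial>M)"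
    by (rule nn_integral_mono[OF E_le])
  also have "\<dots> \<le> (\<integral>\<^sup>+x. indicator (B 0) x * ennreal (Z 0 x) \<partial>M)"
    by (rule nn_integral_stopped_at_exit_le[where Z=Z and B=B, OF _ _ _ step]) (auto simp: B_def)
  also have "\<dots> = 1"
    by (simp add: B_def Z_def S_def Pc_def nn_integral_indicator emeasure_space_1)
  finally have "K * measure M E \<le> 1"
    by (simp add: emeasure_eq_measure ennreal_mult[symmetric] K_pos less_imp_le)
  then have "measure M E \<le> exp (- lam * u) * Pc n"
    using K_pos Pc_pos[of n] unfolding K_def by (simp add: exp_minus field_simps)
  moreover have "E = {x\<in>space M. \<exists>t\<in>{1..n}. (\<Sum>i=1..t. Y i x) \<ge> u}"
    unfolding E_def S_def by (auto simp: min_def)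
  ultimately show ?thesis unfolding Pc_def by simp
qed

lemma exp_neg_mult_powr_le:
  fixes r th s b :: real
  assumes r: "r \<ge> 1" and th: "th > 1" and s: "s \<ge> 0" and b: "b \<ge> s * (th - 1)"
  shows "exp (- (b * r powr (1/(th - 1)))) \<le> exp (- b) * (1/r) powr s"
proof -
  define v where "v = r powr (1/(th - 1))"
  have v1: "v \<ge> 1" unfolding v_def using r th by (simp add: ge_one_powr_ge_zero)
  have b0: "b \<ge> 0" using b s th by (smt (verit) mult_nonneg_nonneg)
  have "s * ln r = s * (th - 1) * ln v" unfolding v_def using r th by (simp add: ln_powr)
  also have "\<dots> \<le> b * ln v" using b v1 by (intro mult_right_mono) auto
  also have "\<dots> \<le> b * (v - 1)" using v1 b0 by (intro mult_left_mono ln_le_minus_one) auto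
  finally have "exp (- (b * v)) \<le> exp (- b + - (s * ln r))" by (simp add: algebra_simps)
  also have "\<dots> = exp (- b) * (1/r) powr s" using r by (simp add: exp_add[symmetric] powr_def ln_div)
  finally show ?thesis unfolding v_def .
qed

definition weibull_truncation :: "real \<Rightarrow> real \<Rightarrow> real \<Rightarrow> real \<Rightarrow> real" where
  "weibull_truncation \<theta> \<beta> m mmax = m * (\<beta> * (mmax / m) powr (1 / (\<theta> - 1))) powr \<theta>"

lemma weibull_truncation_nonneg: "m > 0 \<Longrightarrow> weibull_truncation \<theta> \<beta> m mmax \<ge> 0"
  by (simp add: weibull_truncation_def)

text \<open>Since \<open>t powr (1/\<theta>) / t\<close> decreases in \<open>t\<close>, it is smallest at the truncation level, where it
  equals \<open>\<beta> powr (1 - \<theta>) \<cdot> m / mmax\<close>.\<close>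
lemma mult_le_half_powr_below_weibull_truncation:
  fixes th lam y x beta m ms :: real
  assumes th: "th > 1" and y: "y > 0" "y \<le> weibull_truncation th beta m ms" "y \<le> \<bar>x\<bar>"
    and lam: "lam \<le> beta powr (1 - th) / (2 * ms)" and m: "m > 0" "m \<le> ms" and beta: "beta > 0"
  shows "lam * y \<le> (\<bar>x\<bar>/m) powr (1/th) / 2"
proof -
  have ms: "ms > 0" using m by simp
  define t where "t = y/m"
  define bi where "bi = beta * (ms/m) powr (1/(th - 1))"
  have t0: "t > 0" unfolding t_def using y m by simp
  have bi0: "bi > 0" unfolding bi_def using beta ms m by simp
  have "th * (1/th - 1) = 1 - th" using th by (simp add: field_simps)
  then have bi_powr: "(bi powr th) powr (1/th - 1) = bi powr (1 - th)" by (simp add: powr_powr)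
  have "t \<le> bi powr th" unfolding t_def bi_def using y m by (simp add: weibull_truncation_def field_simps)
  then have "(bi powr th) powr (1/th - 1) \<le> t powr (1/th - 1)"
    using th t0 by (intro powr_mono2') (auto simp: field_simps)
  also have "(bi powr th) powr (1/th - 1) = bi powr (1 - th)" by (rule bi_powr)
  also have "bi powr (1 - th) = beta powr (1 - th) * (ms/m) powr ((1/(th - 1)) * (1 - th))"
    unfolding bi_def using beta ms m by (simp add: powr_mult powr_powr)
  also have "(1/(th - 1)) * (1 - th) = -1" using th by (simp add: field_simps)
  finally have "beta powr (1 - th) * (m/ms) \<le> t powr (1/th - 1)"
    using ms m by (simp add: powr_minus)
  then have "t * (beta powr (1 - th) * (m/ms)) \<le> t * t powr (1/th - 1)"
    using t0 by (intro mult_left_mono) auto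
  also have "t * t powr (1/th - 1) = t powr (1/th)" using t0 by (simp add: powr_diff)
  finally have "t * (beta powr (1 - th) * (m/ms)) \<le> t powr (1/th)" .
  moreover have "t * (beta powr (1 - th) * (m/ms)) = y * (beta powr (1 - th) / ms)"
    unfolding t_def using m by (simp add: field_simps)
  moreover have "t powr (1/th) \<le> (\<bar>x\<bar>/m) powr (1/th)"
    unfolding t_def using y m th by (intro powr_mono2) (auto simp: divide_right_mono)
  moreover have "2 * (lam * y) \<le> y * (beta powr (1 - th) / ms)"
    using lam y ms by (simp add: field_simps mult_left_mono)
  ultimately show ?thesis by linarith
qed

text \<open>Optimising \<open>-\<lambda>u + \<lambda>\<^sup>2A\<close> over \<open>0 \<le> \<lambda> \<le> c\<close>: either the unconstrained optimum \<open>\<lambda> = u/(2A)\<close>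
  is admissible, or the boundary value \<open>\<lambda> = c\<close> already gains half of the linear term.\<close>
lemma min_chernoff_exponent_le:
  fixes A L c u :: real
  assumes A: "A > 0" and c: "c \<ge> 0" and u: "u \<ge> 0"
    and quadratic: "4 * A * L \<le> u^2" and linear: "2 * L \<le> c * u"
  shows "- min (u / (2 * A)) c * u + (min (u / (2 * A)) c)^2 * A \<le> - L"
proof (cases "u / (2 * A) \<le> c")
  case True
  have "- (u / (2 * A)) * u + (u / (2 * A))^2 * A = - (u^2 / (4 * A))"
    using A by (simp add: power2_eq_square field_simps)
  moreover have "L \<le> u^2 / (4 * A)" using quadratic A by (simp add: field_simps)
  ultimately show ?thesis using True by (simp add: min_def)
next
  case False
  then have "c * A \<le> u / 2" using A by (simp add: field_simps)
  then have "c * (c * A) \<le> c * (u / 2)" using c by (rule mult_left_mono)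
  then have "- c * u + c^2 * A \<le> - (c * u / 2)" by (simp add: power2_eq_square algebra_simps)
  then show ?thesis using False linear by (simp add: min_def)
qed

lemma max_powr_eq_powr_max:
  fixes a b p :: real assumes "a \<ge> 0" "b \<ge> 0" "p \<ge> 0"
  shows "max (a powr p) (b powr p) = max a b powr p"
  using assms powr_mono2[of p a b] powr_mono2[of p b a] by (auto simp: max_def)

lemma zpow_eq_powr: "x \<noteq> 0 \<or> a \<noteq> 0 \<Longrightarrow> zpow x a = x powr a"
  by (simp add: zpow_def)

lemma max_zpow_eq_max_powr:
  fixes ell \<theta> s :: real assumes "ell > 0" "\<theta> \<ge> 1" "s \<ge> 0"
  shows "max (zpow ell (\<theta> - 1)) (zpow (s * \<theta> - s) (\<theta> - 1)) = max ell (s * \<theta> - s) powr (\<theta> - 1)"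
proof (cases "\<theta> = 1")
  case True then show ?thesis using assms by (auto simp: zpow_def max_def)
next
  case False
  have "s * \<theta> - s \<ge> 0" using mult_left_mono[OF assms(2,3)] by simp
  then show ?thesis using assms False by (simp add: zpow_eq_powr max_powr_eq_powr_max)
qed

lemma four_weibull_mgf_const: "4 * weibull_mgf_const \<theta> = 2 powr (3 * \<theta> + 1) * Gamma (3 * \<theta> + 1)"
proof -
  have "3 * \<theta> + 1 = 2 + (3 * \<theta> - 1)" by simp
  then have "(2::real) powr (3 * \<theta> + 1) = 2 powr 2 * 2 powr (3 * \<theta> - 1)" by (simp only: powr_add)
  then show ?thesis unfolding weibull_mgf_const_def by simp
qed

lemma mds_uptoD:
  assumes "mds_upto M n F X"
  shows "filtration_upto M n F"
    and "\<And>i. i \<in> {1..n} \<Longrightarrow> subalgebra M (F (i - 1))"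
    and "\<And>i. i \<in> {1..n} \<Longrightarrow> X i \<in> borel_measurable (F i)"
    and "\<And>i. i \<in> {1..n} \<Longrightarrow> X i \<in> borel_measurable M"
    and "\<And>i. i \<in> {1..n} \<Longrightarrow> integrable M (X i)"
    and "\<And>i. i \<in> {1..n} \<Longrightarrow> AE x in M. real_cond_exp M (F (i - 1)) (X i) x = 0"
  using assms unfolding mds_upto_def filtration_upto_def by (auto intro: le_trans[OF diff_le_self])

context sigma_finite_subalgebra
begin

lemma nn_cond_exp_exp_truncated_le:
  fixes X Y :: "'a \<Rightarrow> real"
  assumes X: "integrable M X" "AE x in M. real_cond_exp M F X x = 0"
    and m: "m > 0" and th: "th \<ge> 1" and lam: "lam \<ge> 0"
    and orlicz: "AE x in M. nn_cond_exp M F (\<lambda>y. ennreal (exp ((\<bar>X y\<bar> / m) powr (1 / th)))) x \<le> 2"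
    and [measurable]: "Y \<in> borel_measurable M"
    and Y_le: "\<And>x. x \<in> space M \<Longrightarrow> Y x \<le> X x"
    and Y_neg: "\<And>x. x \<in> space M \<Longrightarrow> min (Y x) 0 = min (X x) 0"
    and small: "\<And>x. x \<in> space M \<Longrightarrow> Y x > 0 \<Longrightarrow> lam * Y x \<le> (\<bar>X x\<bar>/m) powr (1/th) / 2"
  shows "AE x in M. nn_cond_exp M F (\<lambda>x. ennreal (exp (lam * Y x))) x
           \<le> ennreal (exp (lam^2 * m^2 * weibull_mgf_const th))"
proof -
  have [measurable]: "X \<in> borel_measurable M" using X by auto
  define d where "d = lam^2 * m^2 * weibull_mgf_const th / 2"
  have d: "d \<ge> 0" unfolding d_def using weibull_mgf_const_pos[OF th] by simp
  have mgf: "AE x in M. nn_cond_exp M F (\<lambda>x. ennreal (exp (lam * Y x))) x \<le> ennreal (1 + 2 * d)"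
  proof (rule nn_cond_exp_exp_le[OF X _ _ orlicz lam d _ Y_le Y_neg])
    fix x assume x: "x \<in> space M"
    have "\<bar>Y x\<bar> \<le> \<bar>X x\<bar>" using Y_le[OF x] Y_neg[OF x] by (auto simp: min_def split: if_splits)
    then show "exp (lam * Y x) \<le> 1 + lam * Y x + d * exp ((\<bar>X x\<bar> / m) powr (1 / th))"
      unfolding d_def using exp_le_subweibull[OF th lam m _ small[OF x]] by simp
  qed auto
  have "ennreal (1 + 2 * d) \<le> ennreal (exp (lam^2 * m^2 * weibull_mgf_const th))"
    using exp_ge_add_one_self[of "2 * d"] by (intro ennreal_leI) (simp add: d_def)
  from order_trans[OF _ this] show ?thesis using mgf by (rule eventually_mono[rotated])
qed

end

lemma prob_exists_gt_weibull_truncation_le: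
  fixes X :: "nat \<Rightarrow> 'a \<Rightarrow> real"
  assumes P: "prob_space M" and sub: "\<And>i. i \<in> {1..n} \<Longrightarrow> subalgebra M (F (i - 1))"
    and [measurable]: "\<And>i. i \<in> {1..n} \<Longrightarrow> X i \<in> borel_measurable M"
    and m: "\<And>i. i \<in> {1..n} \<Longrightarrow> m i > 0" and m_le: "\<And>i. i \<in> {1..n} \<Longrightarrow> m i \<le> ms"
    and orlicz: "\<And>i. i \<in> {1..n} \<Longrightarrow>
      AE x in M. nn_cond_exp M (F (i - 1)) (\<lambda>y. ennreal (exp ((\<bar>X i y\<bar> / m i) powr (1 / th)))) x \<le> 2"
    and th: "th > 1" and s: "s \<ge> 0" and beta: "beta \<ge> s * (th - 1)"
  shows "measure M {x\<in>space M. \<exists>i\<in>{1..n}. X i x > weibull_truncation th beta (m i) ms}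
           \<le> 2 * exp (- beta) * (\<Sum>i=1..n. m i powr s) / ms powr s"
proof -
  interpret prob_space M by fact
  have tail: "measure M {x\<in>space M. X i x > weibull_truncation th beta (m i) ms}
      \<le> 2 * exp (- beta) * (m i powr s / ms powr s)" if i: "i \<in> {1..n}" for i
  proof -
    interpret sigma_finite_subalgebra M "F (i - 1)"
      using sigma_finite_subalgebra_of_prob_space[OF P sub[OF i]] .
    define b where "b = beta * (ms / m i) powr (1/(th - 1))"
    have "(\<bar>X i x\<bar> / m i) powr (1/th) \<ge> b"
      if "X i x > weibull_truncation th beta (m i) ms" for x
    proof -
      have "b powr th \<le> \<bar>X i x\<bar> / m i"
        using that m[OF i] weibull_truncation_nonneg[OF m[OF i]]
        by (simp add: weibull_truncation_def b_def field_simps)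
      then have "(b powr th) powr (1/th) \<le> (\<bar>X i x\<bar> / m i) powr (1/th)"
        using th by (intro powr_mono2) auto
      then show ?thesis using th beta s by (simp add: powr_powr b_def)
    qed
    then have "measure M {x\<in>space M. X i x > weibull_truncation th beta (m i) ms}
        \<le> measure M {x\<in>space M. (\<bar>X i x\<bar> / m i) powr (1/th) \<ge> b}"
      using i by (intro finite_measure_mono) auto
    also have "\<dots> \<le> 2 * exp (- b)" using i by (intro prob_exp_ge_le[OF P _ orlicz]) auto
    also have "exp (- b) \<le> exp (- beta) * (1 / (ms / m i)) powr s"
      unfolding b_def using m[OF i] m_le[OF i] by (intro exp_neg_mult_powr_le th s beta) auto
    also have "(1 / (ms / m i)) powr s = m i powr s / ms powr s"
      using m[OF i] m_le[OF i] by (simp add: powr_divide)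
    finally show ?thesis by simp
  qed
  have "measure M {x\<in>space M. \<exists>i\<in>{1..n}. X i x > weibull_truncation th beta (m i) ms}
      \<le> (\<Sum>i=1..n. measure M {x\<in>space M. X i x > weibull_truncation th beta (m i) ms})"
  proof -
    have "{x\<in>space M. \<exists>i\<in>{1..n}. X i x > weibull_truncation th beta (m i) ms}
        = (\<Union>i\<in>{1..n}. {x\<in>space M. X i x > weibull_truncation th beta (m i) ms})" by auto
    then show ?thesis by (simp only:) (rule finite_measure_subadditive_finite; auto)
  qed
  also have "\<dots> \<le> (\<Sum>i=1..n. 2 * exp (- beta) * (m i powr s / ms powr s))"
    by (rule sum_mono) (rule tail)
  also have "\<dots> = 2 * exp (- beta) * (\<Sum>i=1..n. m i powr s) / ms powr s"
    by (simp add: sum_distrib_left sum_divide_distrib[symmetric])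
  finally show ?thesis .
qed

lemma (in finite_measure) measure_exists_partial_sum_ge_le_add:
  fixes X Y :: "nat \<Rightarrow> 'a \<Rightarrow> real"
  assumes [measurable]: "\<And>i. i \<in> {1..n} \<Longrightarrow> X i \<in> borel_measurable M"
    "\<And>i. i \<in> {1..n} \<Longrightarrow> Y i \<in> borel_measurable M"
  shows "measure M {x\<in>space M. \<exists>t\<in>{1..n}. (\<Sum>i=1..t. X i x) \<ge> u}
    \<le> measure M {x\<in>space M. \<exists>t\<in>{1..n}. (\<Sum>i=1..t. Y i x) \<ge> u}
      + measure M {x\<in>space M. \<exists>i\<in>{1..n}. Y i x \<noteq> X i x}"
proof -
  have "{x\<in>space M. \<exists>t\<in>{1..n}. (\<Sum>i=1..t. X i x) \<ge> u}
      \<subseteq> {x\<in>space M. \<exists>t\<in>{1..n}. (\<Sum>i=1..t. Y i x) \<ge> u} \<union> {x\<in>space M. \<exists>i\<in>{1..n}. Y i x \<noteq> X i x}"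
    by auto (metis (no_types, lifting) atLeastAtMost_iff le_trans sum.cong)
  then show ?thesis
    by (intro order_trans[OF finite_measure_mono measure_Un_le]) measurable
qed

lemma subgaussian_maximal_inequality:
  fixes M :: "'a measure" and F :: "nat \<Rightarrow> 'a measure"
    and X :: "nat \<Rightarrow> 'a \<Rightarrow> real" and m :: "nat \<Rightarrow> real" and \<delta> :: real
  assumes P: "prob_space M" and mds: "mds_upto M n F X"
    and m: "\<And>i. i \<in> {1..n} \<Longrightarrow> m i > 0"
    and orlicz: "\<And>i. i \<in> {1..n} \<Longrightarrow>
      AE x in M. nn_cond_exp M (F (i - 1)) (\<lambda>y. ennreal (exp ((\<bar>X i y\<bar> / m i) powr 2))) x \<le> 2"
    and \<delta>: "0 < \<delta>" "\<delta> < 1"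
  shows "measure M {x \<in> space M. \<exists>t\<in>{1..n}.
           (\<Sum>i=1..t. X i x) \<ge> 4 * sqrt (exp 1 * (\<Sum>i=1..n. (m i)\<^sup>2) * ln (1 / \<delta>))} \<le> \<delta>"
proof (cases "n = 0")
  case True then show ?thesis using \<delta> by simp
next
  case False
  note mds = mds_uptoD[OF mds]
  define V where "V = (\<Sum>i=1..n. (m i)\<^sup>2)"
  define L where "L = ln (1 / \<delta>)"
  define u where "u = 4 * sqrt (exp 1 * V * L)"
  define lam where "lam = u / (8 * V)"
  have V_pos: "V > 0" unfolding V_def using False m by (intro sum_pos) (auto simp: less_imp_neq[symmetric])
  have L_pos: "L > 0" unfolding L_def using \<delta> by simp
  have lam: "lam \<ge> 0" unfolding lam_def u_def using V_pos L_pos by simp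
  have mgf: "AE x in M. nn_cond_exp M (F (i - 1)) (\<lambda>x. ennreal (exp (lam * X i x))) x
      \<le> ennreal (exp (4 * (lam^2 * (m i)^2)))" if i: "i \<in> {1..n}" for i
  proof -
    interpret sigma_finite_subalgebra M "F (i - 1)"
      by (rule sigma_finite_subalgebra_of_prob_space[OF P mds(2)[OF i]])
    define a where "a = lam^2 * (m i)^2"
    have mgf: "AE x in M. nn_cond_exp M (F (i - 1)) (\<lambda>x. ennreal (exp (lam * X i x))) x
        \<le> ennreal (1 + 2 * (a * exp (a/2) / exp 1))"
      using i m[OF i] exp_le_subgaussian[OF lam m[OF i]] mds(4-6)[OF i]
      by (intro nn_cond_exp_exp_le[OF _ _ _ _ orlicz[OF i] lam])
         (auto simp: a_def power_divide power2_abs)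
    have "ennreal (1 + 2 * (a * exp (a/2) / exp 1)) \<le> ennreal (exp (4 * a))"
      unfolding a_def by (intro ennreal_leI one_add_mult_exp_half_le_exp) simp
    with mgf show ?thesis unfolding a_def by (auto elim: eventually_mono order_trans)
  qed
  have "measure M {x\<in>space M. \<exists>t\<in>{1..n}. (\<Sum>i=1..t. X i x) \<ge> u}
      \<le> exp (- lam * u) * (\<Prod>i=1..n. exp (4 * (lam^2 * (m i)^2)))"
    by (rule prob_exists_partial_sum_ge_le[OF P mds(1,3) lam _ mgf]) auto
  also have "\<dots> = exp (- lam * u + 4 * lam^2 * V)"
    unfolding V_def by (simp add: exp_sum[symmetric] exp_add[symmetric] sum_distrib_left mult.assoc)
  also have "- lam * u + 4 * lam^2 * V = - (exp 1 * L)"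
    unfolding lam_def u_def using V_pos L_pos by (simp add: power2_eq_square field_simps)
  also have "exp (- (exp 1 * L)) \<le> exp (- L)" using L_pos by simp
  also have "exp (- L) = \<delta>" unfolding L_def using \<delta> by (simp add: exp_minus ln_div)
  finally show ?thesis unfolding u_def V_def L_def .
qed

text \<open>For \<open>\<theta> = 1\<close> the truncation level is infinite.\<close>
definition weibull_truncate :: "real \<Rightarrow> real \<Rightarrow> real \<Rightarrow> real \<Rightarrow> real \<Rightarrow> real" where
  "weibull_truncate \<theta> \<beta> m mmax x = (if \<theta> = 1 then x else min x (weibull_truncation \<theta> \<beta> m mmax))"

lemma cond_mgf_weibull_truncate_le:
  fixes X :: "nat \<Rightarrow> 'a \<Rightarrow> real"
  assumes P: "prob_space M" and mds: "mds_upto M n F X"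
    and m: "\<And>i. i \<in> {1..n} \<Longrightarrow> m i > 0"
    and orlicz: "\<And>i. i \<in> {1..n} \<Longrightarrow>
      AE x in M. nn_cond_exp M (F (i - 1)) (\<lambda>y. ennreal (exp ((\<bar>X i y\<bar> / m i) powr (1 / \<theta>)))) x \<le> 2"
    and \<theta>: "\<theta> \<ge> 1" and i: "i \<in> {1..n}" and m_le: "m i \<le> ms" and beta: "beta > 0"
    and lam: "lam \<ge> 0" "lam \<le> beta powr (1 - \<theta>) / (2 * ms)"
  shows "AE x in M. nn_cond_exp M (F (i - 1)) (\<lambda>x. ennreal (exp (lam * weibull_truncate \<theta> beta (m i) ms (X i x)))) x
           \<le> ennreal (exp (lam^2 * (m i)^2 * weibull_mgf_const \<theta>))"
proof -
  note mds = mds_uptoD[OF mds]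
  interpret sigma_finite_subalgebra M "F (i - 1)"
    by (rule sigma_finite_subalgebra_of_prob_space[OF P mds(2)[OF i]])
  define Y where "Y x = weibull_truncate \<theta> beta (m i) ms (X i x)" for x
  have Y_meas: "Y \<in> borel_measurable M"
    using mds(4)[OF i] unfolding Y_def weibull_truncate_def by (cases "\<theta> = 1") auto
  have small: "lam * Y x \<le> (\<bar>X i x\<bar> / m i) powr (1/\<theta>) / 2" if pos: "Y x > 0" for x
  proof (cases "\<theta> = 1")
    case True
    then have "lam \<le> 1 / (2 * ms)" using lam(2) beta by simp
    also have "\<dots> \<le> 1 / (2 * m i)" using m_le m[OF i] by (intro divide_left_mono) auto
    finally have "lam \<le> 1 / (2 * m i)" .
    then show ?thesis using True pos m[OF i] mult_right_mono[of lam "1 / (2 * m i)" "X i x"]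
      by (simp add: Y_def weibull_truncate_def)
  next
    case False
    then show ?thesis
      using pos \<theta> m[OF i] m_le beta lam(2) unfolding Y_def weibull_truncate_def
      by (intro mult_le_half_powr_below_weibull_truncation[where beta=beta and ms=ms]) auto
  qed
  show ?thesis unfolding Y_def[symmetric]
    by (rule nn_cond_exp_exp_truncated_le[OF mds(5,6)[OF i] m[OF i] \<theta> lam(1) orlicz[OF i] Y_meas])
       (use small weibull_truncation_nonneg[OF m[OF i], of \<theta> beta ms] in \<open>auto simp: Y_def weibull_truncate_def min_def\<close>)
qed

lemma prob_exists_truncated_partial_sum_ge_le:
  fixes X :: "nat \<Rightarrow> 'a \<Rightarrow> real"
  assumes P: "prob_space M" and mds_assm: "mds_upto M n F X"
    and m: "\<And>i. i \<in> {1..n} \<Longrightarrow> m i > 0"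
    and orlicz: "\<And>i. i \<in> {1..n} \<Longrightarrow>
      AE x in M. nn_cond_exp M (F (i - 1)) (\<lambda>y. ennreal (exp ((\<bar>X i y\<bar> / m i) powr (1 / \<theta>)))) x \<le> 2"
    and \<theta>: "\<theta> \<ge> 1" and m_le: "\<And>i. i \<in> {1..n} \<Longrightarrow> m i \<le> ms" and beta: "beta > 0"
    and lam: "lam \<ge> 0" "lam \<le> beta powr (1 - \<theta>) / (2 * ms)"
  shows "measure M {x\<in>space M. \<exists>t\<in>{1..n}. (\<Sum>i=1..t. weibull_truncate \<theta> beta (m i) ms (X i x)) \<ge> u}
           \<le> exp (- lam * u + lam^2 * (weibull_mgf_const \<theta> * (\<Sum>i=1..n. (m i)^2)))"
proof -
  note mds = mds_uptoD[OF mds_assm]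
  have "measure M {x\<in>space M. \<exists>t\<in>{1..n}. (\<Sum>i=1..t. weibull_truncate \<theta> beta (m i) ms (X i x)) \<ge> u}
      \<le> exp (- lam * u) * (\<Prod>i=1..n. exp (lam^2 * (m i)^2 * weibull_mgf_const \<theta>))"
  proof (rule prob_exists_partial_sum_ge_le[OF P mds(1) _ lam(1)])
    show "(\<lambda>x. weibull_truncate \<theta> beta (m i) ms (X i x)) \<in> borel_measurable (F i)" if "i \<in> {1..n}" for i
      using mds(3)[OF that] unfolding weibull_truncate_def by (cases "\<theta> = 1") auto
    show "AE x in M. nn_cond_exp M (F (i - 1)) (\<lambda>x. ennreal (exp (lam * weibull_truncate \<theta> beta (m i) ms (X i x)))) x
        \<le> ennreal (exp (lam^2 * (m i)^2 * weibull_mgf_const \<theta>))" if "i \<in> {1..n}" for i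
      by (rule cond_mgf_weibull_truncate_le[OF P mds_assm m orlicz \<theta> that m_le[OF that] beta lam])
  qed (use weibull_mgf_const_pos[OF \<theta>] in auto)
  also have "\<dots> = exp (- lam * u + lam^2 * (weibull_mgf_const \<theta> * (\<Sum>i=1..n. (m i)^2)))"
    by (simp add: exp_sum[symmetric] exp_add[symmetric] sum_distrib_left sum_distrib_right
        mult.commute mult.left_commute)
  finally show ?thesis .
qed

lemma subweibull_maximal_inequality:
  fixes M :: "'a measure" and F :: "nat \<Rightarrow> 'a measure"
    and X :: "nat \<Rightarrow> 'a \<Rightarrow> real" and m :: "nat \<Rightarrow> real" and \<theta> \<delta> s :: real
  assumes P: "prob_space M" and mds_assm: "mds_upto M n F X"
    and m: "\<And>i. i \<in> {1..n} \<Longrightarrow> m i > 0"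
    and orlicz: "\<And>i. i \<in> {1..n} \<Longrightarrow>
      AE x in M. nn_cond_exp M (F (i - 1)) (\<lambda>y. ennreal (exp ((\<bar>X i y\<bar> / m i) powr (1 / \<theta>)))) x \<le> 2"
    and \<delta>: "0 < \<delta>" "\<delta> < 1" and \<theta>: "\<theta> \<ge> 1" and s: "s \<ge> 0"
  shows "(let mstar = Max (m ` {1..n});
              C1 = 2 powr (3 * \<theta> + 1) * Gamma (3 * \<theta> + 1)
          in measure M {x \<in> space M. \<exists>t\<in>{1..n}.
            (\<Sum>i=1..t. X i x) \<ge>
              sqrt (C1 * (\<Sum>i=1..n. (m i)\<^sup>2) * ln (2 / \<delta>))
              + 4 * mstar *
                max (zpow (ln (2 * exp 1 * (\<Sum>j=1..n. m j powr s) / (mstar powr s * \<delta>))) (\<theta> - 1))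
                    (zpow (s * \<theta> - s) (\<theta> - 1))
                * ln (2 / \<delta>)} \<le> \<delta>)"
proof (cases "n = 0")
  case True then show ?thesis using \<delta> by (simp add: Let_def)
next
  case False
  interpret prob_space M by fact
  note mds = mds_uptoD[OF mds_assm]
  define ms where "ms = Max (m ` {1..n})"
  have m_le: "m i \<le> ms" if "i \<in> {1..n}" for i unfolding ms_def using that by (intro Max_ge) auto
  have "finite (m ` {1..n})" "m ` {1..n} \<noteq> {}" using False by auto
  from Max_in[OF this] obtain j where j: "j \<in> {1..n}" "m j = ms" unfolding ms_def by auto
  have ms_pos: "ms > 0" using j m by force
  define K where "K = weibull_mgf_const \<theta>"
  have K_pos: "K > 0" unfolding K_def using \<theta> by (rule weibull_mgf_const_pos)
  define C1 where "C1 = 2 powr (3 * \<theta> + 1) * Gamma (3 * \<theta> + 1)"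
  have C1: "C1 = 4 * K" unfolding C1_def K_def by (rule four_weibull_mgf_const[symmetric])
  define V where "V = (\<Sum>i=1..n. (m i)\<^sup>2)"
  have V_pos: "V > 0" unfolding V_def using False m by (intro sum_pos) (auto simp: less_imp_neq[symmetric])
  define L where "L = ln (2 / \<delta>)"
  have L_pos: "L > 0" unfolding L_def using \<delta> by simp
  define N where "N = (\<Sum>j=1..n. m j powr s)"
  have N_ge: "ms powr s \<le> N" unfolding N_def using j
    by (intro member_le_sum[where f="\<lambda>j. m j powr s" and i=j, simplified j]) auto
  have ms_powr_pos: "ms powr s > 0" using ms_pos by simp
  with N_ge have N_pos: "N > 0" by linarith
  define ell where "ell = ln (2 * exp 1 * N / (ms powr s * \<delta>))"
  have "2 * exp 1 / \<delta> \<le> 2 * exp 1 * N / (ms powr s * \<delta>)"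
    using N_ge ms_powr_pos \<delta> by (simp add: field_simps)
  moreover have "\<delta> < 2 * exp 1" using \<delta> exp_ge_add_one_self[of 1] by linarith
  then have "1 < 2 * exp 1 / \<delta>" using \<delta> by (simp add: field_simps)
  ultimately have ell_pos: "ell > 0" and exp_ell: "exp (- ell) = ms powr s * \<delta> / (2 * exp 1 * N)"
    unfolding ell_def by (simp_all add: exp_minus)
  define beta where "beta = max ell (s * \<theta> - s)"
  have beta: "beta > 0" "beta \<ge> ell" "beta \<ge> s * (\<theta> - 1)"
    unfolding beta_def using ell_pos by (auto simp: algebra_simps)
  define R where "R = max (zpow ell (\<theta> - 1)) (zpow (s * \<theta> - s) (\<theta> - 1))"
  have R: "R = beta powr (\<theta> - 1)"
    unfolding R_def beta_def using ell_pos \<theta> s by (rule max_zpow_eq_max_powr)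
  define u where "u = sqrt (C1 * V * L) + 4 * ms * R * L"
  define lam where "lam = min (u / (2 * (K * V))) (beta powr (1 - \<theta>) / (2 * ms))"
  have u_ge: "sqrt (C1 * V * L) \<le> u" "4 * ms * R * L \<le> u"
    unfolding u_def R using ms_pos L_pos beta C1 K_pos V_pos by auto
  have "0 \<le> 4 * ms * R * L" unfolding R using ms_pos L_pos by simp
  with u_ge(2) have u_pos: "u \<ge> 0" by linarith
  have lam: "lam \<ge> 0" "lam \<le> beta powr (1 - \<theta>) / (2 * ms)"
    unfolding lam_def using u_pos K_pos V_pos ms_pos by auto
  define Y where "Y = (\<lambda>i x. weibull_truncate \<theta> beta (m i) ms (X i x))"
  have Y_meas: "Y i \<in> borel_measurable M" if "i \<in> {1..n}" for i
    using mds(4)[OF that] unfolding Y_def weibull_truncate_def by (cases "\<theta> = 1") auto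
  have "measure M {x\<in>space M. \<exists>t\<in>{1..n}. (\<Sum>i=1..t. Y i x) \<ge> u}
      \<le> exp (- lam * u + lam^2 * (K * V))"
    unfolding Y_def K_def V_def using m_le beta(1) lam
    by (intro prob_exists_truncated_partial_sum_ge_le[OF P mds_assm m orlicz \<theta>])
  also have "\<dots> \<le> exp (- L)"
    unfolding lam_def
  proof (intro exp_mono min_chernoff_exponent_le)
    show "4 * (K * V) * L \<le> u^2"
      using power_mono[OF u_ge(1), of 2] C1 K_pos V_pos L_pos by (simp add: mult.assoc)
    have "beta powr (1 - \<theta>) * beta powr (\<theta> - 1) = 1" using beta(1) by (simp add: powr_add[symmetric])
    then show "2 * L \<le> beta powr (1 - \<theta>) / (2 * ms) * u"
      using mult_left_mono[OF u_ge(2), of "beta powr (1 - \<theta>) / (2 * ms)"] ms_pos unfolding R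
      by (simp add: field_simps)
  qed (use K_pos V_pos ms_pos u_pos in auto)
  also have "exp (- L) = \<delta> / 2" unfolding L_def using \<delta> by (simp add: exp_minus)
  finally have max_Y: "measure M {x\<in>space M. \<exists>t\<in>{1..n}. (\<Sum>i=1..t. Y i x) \<ge> u} \<le> \<delta> / 2" .
  have truncation: "measure M {x\<in>space M. \<exists>i\<in>{1..n}. Y i x \<noteq> X i x} \<le> \<delta> / 2"
  proof (cases "\<theta> = 1")
    case True then show ?thesis using \<delta> by (simp add: Y_def weibull_truncate_def)
  next
    case False
    have "measure M {x\<in>space M. \<exists>i\<in>{1..n}. Y i x \<noteq> X i x}
        \<le> measure M {x\<in>space M. \<exists>i\<in>{1..n}. X i x > weibull_truncation \<theta> beta (m i) ms}"
      using False Y_meas mds(4) by (intro finite_measure_mono) (auto simp: Y_def weibull_truncate_def min_def not_le split: if_splits)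
    also have "\<dots> \<le> 2 * exp (- beta) * N / ms powr s"
      unfolding N_def using False \<theta> m m_le orlicz mds(2,4) s beta(3)
      by (intro prob_exists_gt_weibull_truncation_le[OF P, where F=F]) auto
    also have "\<dots> \<le> 2 * exp (- ell) * N / ms powr s"
      using beta(2) N_pos ms_powr_pos by (intro divide_right_mono mult_right_mono mult_left_mono) auto
    also have "\<dots> = \<delta> / exp 1" unfolding exp_ell using ms_powr_pos N_pos by (simp add: field_simps)
    also have "\<dots> \<le> \<delta> / 2" using \<delta> exp_ge_add_one_self[of 1] by (intro divide_left_mono) auto
    finally show ?thesis .
  qed
  have "measure M {x\<in>space M. \<exists>t\<in>{1..n}. (\<Sum>i=1..t. X i x) \<ge> u} \<le> \<delta>"
    using measure_exists_partial_sum_ge_le_add[where n=n and X=X and Y=Y and u=u] mds(4) Y_meas max_Y truncation by simp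
  then show ?thesis unfolding Let_def u_def C1_def V_def L_def R_def ell_def N_def ms_def .
qed

theorem proposition2:
  fixes M :: "'a measure" and n :: nat and F :: "nat \<Rightarrow> 'a measure"
    and X :: "nat \<Rightarrow> 'a \<Rightarrow> real" and m :: "nat \<Rightarrow> real" and \<theta> \<delta> :: real
  assumes "prob_space M"
    and "mds_upto M n F X"
    and "\<And>i. i \<in> {1..n} \<Longrightarrow> m i > 0"
    and "\<And>i. i \<in> {1..n} \<Longrightarrow>
           AE x in M. nn_cond_exp M (F (i - 1))
              (\<lambda>y. ennreal (exp ((\<bar>X i y\<bar> / m i) powr (1 / \<theta>)))) x \<le> 2"
    and "0 < \<delta>" and "\<delta> < 1"
  shows "(\<theta> = 1/2 \<longrightarrow>
           measure M {x \<in> space M. \<exists>t\<in>{1..n}.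
              (\<Sum>i=1..t. X i x) \<ge> 4 * sqrt (exp 1 * (\<Sum>i=1..n. (m i)\<^sup>2) * ln (1 / \<delta>))} \<le> \<delta>)
       \<and> (\<theta> \<ge> 1 \<longrightarrow> (\<forall>s\<ge>0.
           (let mstar = Max (m ` {1..n});
                C1 = 2 powr (3 * \<theta> + 1) * Gamma (3 * \<theta> + 1)
            in measure M {x \<in> space M. \<exists>t\<in>{1..n}.
              (\<Sum>i=1..t. X i x) \<ge>
                sqrt (C1 * (\<Sum>i=1..n. (m i)\<^sup>2) * ln (2 / \<delta>))
                + 4 * mstar *
                  max (zpow (ln (2 * exp 1 * (\<Sum>j=1..n. m j powr s) / (mstar powr s * \<delta>))) (\<theta> - 1))
                      (zpow (s * \<theta> - s) (\<theta> - 1))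
                  * ln (2 / \<delta>)} \<le> \<delta>)))"
proof (intro conjI impI allI)
  assume \<theta>: "\<theta> = 1/2"
  have "1 / \<theta> = 2" unfolding \<theta> by simp
  then show "measure M {x \<in> space M. \<exists>t\<in>{1..n}.
      (\<Sum>i=1..t. X i x) \<ge> 4 * sqrt (exp 1 * (\<Sum>i=1..n. (m i)\<^sup>2) * ln (1 / \<delta>))} \<le> \<delta>"
    using subgaussian_maximal_inequality[OF assms(1-3) _ assms(5,6)] assms(4) by simp
qed (rule subweibull_maximal_inequality[OF assms])

end
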